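(* Let $n\ge 3$ and let $K_n$ be the complete graph on $n$ vertices. Then the distance eigenvalues of $K_n\otimes K_n$ are $(n-1)(n+3)$, $n-3$, $-3$ with multiplicities $1$, $2n-2$, $(n-1)^2$ respectively.
   Context: The Kronecker product $G\otimes H$ of simple graphs $G,H$ has vertex set $V(G)\times V(H)$, with $(x,y)$ adjacent to $(u,v)$ if and only if $xu\in E(G)$ and $yv\in E(H)$. Distance eigenvalues are the eigenvalues of the distance matrix, whose $(u,v)$ entry is the length of a shortest $u$–$v$ path. *)

theory Defs
  imports "Jordan_Normal_Form.Char_Poly"
begin

text \<open>Simple graphs are given by a symmetric irreflexive adjacency relation.\<close>

definition complete_graph :: "nat \<Rightarrow> nat \<Rightarrow> nat \<Rightarrow> bool" where
  "complete_graph n u v \<longleftrightarrow> u < n \<and> v < n \<and> u \<noteq> v"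

definition kronecker_graph ::
  "('a \<Rightarrow> 'a \<Rightarrow> bool) \<Rightarrow> ('b \<Rightarrow> 'b \<Rightarrow> bool) \<Rightarrow> ('a \<times> 'b) \<Rightarrow> ('a \<times> 'b) \<Rightarrow> bool" where
  "kronecker_graph G H p q \<longleftrightarrow> G (fst p) (fst q) \<and> H (snd p) (snd q)"

definition walk_of_length :: "('a \<Rightarrow> 'a \<Rightarrow> bool) \<Rightarrow> nat \<Rightarrow> 'a \<Rightarrow> 'a \<Rightarrow> bool" where
  "walk_of_length E k u v \<longleftrightarrow>
     (\<exists>p :: nat \<Rightarrow> 'a. p 0 = u \<and> p k = v \<and> (\<forall>i<k. E (p i) (p (Suc i))))"

text \<open>Length of a shortest u-v path (= shortest walk).\<close>
definition graph_dist :: "('a \<Rightarrow> 'a \<Rightarrow> bool) \<Rightarrow> 'a \<Rightarrow> 'a \<Rightarrow> nat" where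
  "graph_dist E u v = (LEAST k. walk_of_length E k u v)"

definition distance_matrix :: "('a \<Rightarrow> 'a \<Rightarrow> bool) \<Rightarrow> 'a list \<Rightarrow> real mat" where
  "distance_matrix E vs =
     mat (length vs) (length vs) (\<lambda>(i, j). real (graph_dist E (vs ! i) (vs ! j)))"

end

theory Submission
  imports Defs
begin

text \<open>In K_m \<otimes> K_n two vertices are adjacent iff both coordinates differ, and for m, n \<ge> 3 any
  two distinct vertices have a common neighbour. So the distance of (a, b) and (c, d) is
  (1 + [a = c]) (1 + [b = d]) - 4 [(a, b) = (c, d)], i.e. the distance matrix is
  (J + I) \<otimes> (J + I) - 4 I with J the all-ones matrix. J is diagonalised by an explicit
  eigenbasis with eigenvalues n, 0, ..., 0, and a Kronecker product of similarities is a
  similarity; hence the eigenvalues are (\<lambda> + 1) (\<mu> + 1) - 4 for eigenvalues \<lambda> of J_m and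
  \<mu> of J_n, namely (m + 1) (n + 1) - 4, m - 3, n - 3 and -3.\<close>

lemma div_mod_less:
  fixes i :: nat
  assumes "i < m * n"
  shows "i div n < m" "i mod n < n"
proof -
  from assms have "0 < n" by (cases n) auto
  with assms show "i div n < m" "i mod n < n"
    by (simp_all add: less_mult_imp_div_less)
qed

lemma eq_iff_div_mod_eq: "i = j \<longleftrightarrow> i div n = j div n \<and> i mod n = j mod (n::nat)"
  by (metis div_mult_mod_eq)

lemma bij_betw_div_mod: "bij_betw (\<lambda>i. (i div n, i mod n)) {..<m * n} ({..<m} \<times> {..<n::nat})"
proof (rule bij_betwI[where g = "\<lambda>(a, b). a * n + b"])
  have "a * n + b < m * n" if "a < m" "b < n" for a b
  proof -
    have "a * n + b < (a + 1) * n" using that by simp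
    also have "\<dots> \<le> m * n" using that by (intro mult_le_mono1) simp
    finally show ?thesis .
  qed
  then show "(\<lambda>(a, b). a * n + b) \<in> {..<m} \<times> {..<n} \<rightarrow> {..<m * n}" by auto
qed (auto simp: div_mod_less)

lemma sum_div_mod: "(\<Sum>i<m * n. f (i div n) (i mod n)) = (\<Sum>a<m. \<Sum>b<n::nat. f a b)"
  using sum.reindex_bij_betw[OF bij_betw_div_mod, of "\<lambda>(a, b). f a b"]
  by (simp add: sum.cartesian_product)

lemma prod_div_mod: "(\<Prod>i<m * n. f (i div n) (i mod n)) = (\<Prod>a<m. \<Prod>b<n::nat. f a b)"
  using prod.reindex_bij_betw[OF bij_betw_div_mod, of "\<lambda>(a, b). f a b"]
  by (simp add: prod.cartesian_product)

definition kronecker_mat :: "'a :: times mat \<Rightarrow> 'a mat \<Rightarrow> 'a mat" where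
  "kronecker_mat A B = mat (dim_row A * dim_row B) (dim_col A * dim_col B)
     (\<lambda>(i, j). A $$ (i div dim_row B, j div dim_col B) * B $$ (i mod dim_row B, j mod dim_col B))"

lemma dim_kronecker_mat[simp]:
  "dim_row (kronecker_mat A B) = dim_row A * dim_row B"
  "dim_col (kronecker_mat A B) = dim_col A * dim_col B"
  by (simp_all add: kronecker_mat_def)

lemma kronecker_carrier_mat[simp]:
  "A \<in> carrier_mat m n \<Longrightarrow> B \<in> carrier_mat p q \<Longrightarrow> kronecker_mat A B \<in> carrier_mat (m * p) (n * q)"
  unfolding carrier_mat_def mem_Collect_eq by simp

lemma index_kronecker_mat[simp]:
  "i < dim_row A * dim_row B \<Longrightarrow> j < dim_col A * dim_col B \<Longrightarrow>
   kronecker_mat A B $$ (i, j) =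
     A $$ (i div dim_row B, j div dim_col B) * B $$ (i mod dim_row B, j mod dim_col B)"
  by (simp add: kronecker_mat_def)

lemma kronecker_mat_mult:
  fixes A B C D :: "'a :: comm_semiring_0 mat"
  assumes "dim_col A = dim_row C" "dim_col B = dim_row D"
  shows "kronecker_mat A B * kronecker_mat C D = kronecker_mat (A * C) (B * D)"
proof (rule eq_matI)
  fix i j
  assume "i < dim_row (kronecker_mat (A * C) (B * D))" "j < dim_col (kronecker_mat (A * C) (B * D))"
  then have i: "i < dim_row A * dim_row B" and j: "j < dim_col C * dim_col D" by simp_all
  let ?k = "dim_row C" and ?l = "dim_row D"
  have "(kronecker_mat A B * kronecker_mat C D) $$ (i, j) =
        (\<Sum>k<?k * ?l. (A $$ (i div dim_row B, k div ?l) * B $$ (i mod dim_row B, k mod ?l)) *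
                      (C $$ (k div ?l, j div dim_col D) * D $$ (k mod ?l, j mod dim_col D)))"
    using i j assms by (simp add: scalar_prod_def lessThan_atLeast0)
  also have "\<dots> = (\<Sum>a<?k. \<Sum>b<?l. (A $$ (i div dim_row B, a) * C $$ (a, j div dim_col D)) *
                                   (B $$ (i mod dim_row B, b) * D $$ (b, j mod dim_col D)))"
    by (subst sum_div_mod) (simp add: mult_ac)
  also have "\<dots> = kronecker_mat (A * C) (B * D) $$ (i, j)"
    using i j assms div_mod_less[OF i] div_mod_less[OF j]
    by (simp add: scalar_prod_def lessThan_atLeast0 sum_product)
  finally show "(kronecker_mat A B * kronecker_mat C D) $$ (i, j) =
                kronecker_mat (A * C) (B * D) $$ (i, j)" .
qed simp_all

lemma kronecker_mat_one: "kronecker_mat (1\<^sub>m m) (1\<^sub>m n) = (1\<^sub>m (m * n) :: 'a :: semiring_1 mat)"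
proof (rule eq_matI)
  fix i j assume "i < dim_row (1\<^sub>m (m * n) :: 'a mat)" "j < dim_col (1\<^sub>m (m * n) :: 'a mat)"
  then show "kronecker_mat (1\<^sub>m m) (1\<^sub>m n) $$ (i, j) = (1\<^sub>m (m * n) :: 'a mat) $$ (i, j)"
    using eq_iff_div_mod_eq[of i j n] by (simp add: div_mod_less)
qed simp_all

lemma similar_mat_wit_kronecker_mat:
  fixes A B :: "'a :: comm_semiring_1 mat"
  assumes "similar_mat_wit A A' P Q" "similar_mat_wit B B' R S"
  shows "similar_mat_wit (kronecker_mat A B) (kronecker_mat A' B')
           (kronecker_mat P R) (kronecker_mat Q S)"
proof -
  define m where "m = dim_row A"
  define n where "n = dim_row B"
  note A = similar_mat_witD[OF m_def assms(1)]
  note B = similar_mat_witD[OF n_def assms(2)]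
  note dims = A(4-7)[THEN carrier_matD(1)] A(4-7)[THEN carrier_matD(2)]
    B(4-7)[THEN carrier_matD(1)] B(4-7)[THEN carrier_matD(2)]
  show ?thesis
  proof (rule similar_mat_witI)
    have "kronecker_mat P R * kronecker_mat Q S = kronecker_mat (P * Q) (R * S)"
      by (rule kronecker_mat_mult) (simp_all only: dims)
    then show "kronecker_mat P R * kronecker_mat Q S = 1\<^sub>m (m * n)"
      by (simp only: A(1-2) B(1-2) kronecker_mat_one)
    have "kronecker_mat Q S * kronecker_mat P R = kronecker_mat (Q * P) (S * R)"
      by (rule kronecker_mat_mult) (simp_all only: dims)
    then show "kronecker_mat Q S * kronecker_mat P R = 1\<^sub>m (m * n)"
      by (simp only: A(1-2) B(1-2) kronecker_mat_one)
    have "kronecker_mat P R * kronecker_mat A' B' = kronecker_mat (P * A') (R * B')"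
      by (rule kronecker_mat_mult) (simp_all only: dims)
    also have "\<dots> * kronecker_mat Q S = kronecker_mat (P * A' * Q) (R * B' * S)"
      by (rule kronecker_mat_mult) (simp_all add: dims)
    finally show "kronecker_mat A B = kronecker_mat P R * kronecker_mat A' B' * kronecker_mat Q S"
      by (simp only: A(3) B(3))
  qed (use A B in simp_all)
qed

lemma similar_mat_wit_add_smult_one:
  fixes A B :: "'a :: comm_semiring_1 mat"
  assumes "similar_mat_wit A B P Q" "A \<in> carrier_mat n n"
  shows "similar_mat_wit (A + c \<cdot>\<^sub>m 1\<^sub>m n) (B + c \<cdot>\<^sub>m 1\<^sub>m n) P Q"
proof -
  note sim = similar_mat_witD2[OF assms(2,1)]
  have "P * (B + c \<cdot>\<^sub>m 1\<^sub>m n) * Q = (P * B + c \<cdot>\<^sub>m P) * Q"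
    using sim by (simp add: mult_add_distrib_mat[of P n n] mult_smult_distrib[of P n n "1\<^sub>m n" n])
  also have "\<dots> = P * B * Q + c \<cdot>\<^sub>m (P * Q)"
    using sim by (simp add: add_mult_distrib_mat[of _ n n] mult_smult_assoc_mat[of P n n Q n])
  finally have "A + c \<cdot>\<^sub>m 1\<^sub>m n = P * (B + c \<cdot>\<^sub>m 1\<^sub>m n) * Q"
    using sim by simp
  with sim show ?thesis by (intro similar_mat_witI) auto
qed

lemma char_poly_diagonal_mat:
  assumes "A \<in> carrier_mat n n" "diagonal_mat A"
  shows "char_poly A = (\<Prod>i<n. [:- A $$ (i, i), 1:])"
proof -
  have "upper_triangular A"
    using assms by (auto simp: diagonal_mat_def)
  then have "char_poly A = (\<Prod>a \<leftarrow> diag_mat A. [:- a, 1:])"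
    by (rule char_poly_upper_triangular[OF assms(1)])
  also have "\<dots> = (\<Prod>i<n. [:- A $$ (i, i), 1:])"
    using assms(1)
    by (simp add: diag_mat_def comp_def prod.distinct_set_conv_list[symmetric] lessThan_atLeast0)
  finally show ?thesis .
qed

definition ones_mat :: "nat \<Rightarrow> 'a :: one mat" where
  "ones_mat n = mat n n (\<lambda>_. 1)"

definition ones_eigenvalue :: "nat \<Rightarrow> nat \<Rightarrow> real" where
  "ones_eigenvalue n i = (if i = 0 then real n else 0)"

definition ones_eigenvalue_mat :: "nat \<Rightarrow> real mat" where
  "ones_eigenvalue_mat n = mat n n (\<lambda>(i, j). if i = j then ones_eigenvalue n i else 0)"

text \<open>Column 0 is the all-ones eigenvector of J (eigenvalue n); column j > 0 is e_0 - e_j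
  (eigenvalue 0).\<close>
definition ones_eigenbasis_mat :: "nat \<Rightarrow> real mat" where
  "ones_eigenbasis_mat n = mat n n (\<lambda>(i, j). if j = 0 then 1 else of_bool (i = 0) - of_bool (i = j))"

definition ones_eigenbasis_inv_mat :: "nat \<Rightarrow> real mat" where
  "ones_eigenbasis_inv_mat n = mat n n (\<lambda>(i, j). 1 / real n - of_bool (i \<noteq> 0 \<and> i = j))"

lemma ones_carrier_mat[simp]: "ones_mat n \<in> carrier_mat n n"
  by (simp add: ones_mat_def)

lemma ones_eigen_carrier_mats[simp]:
  "ones_eigenvalue_mat n \<in> carrier_mat n n"
  "ones_eigenbasis_mat n \<in> carrier_mat n n"
  "ones_eigenbasis_inv_mat n \<in> carrier_mat n n"
  by (simp_all add: ones_eigenvalue_mat_def ones_eigenbasis_mat_def ones_eigenbasis_inv_mat_def)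

lemma dim_ones_eigen_mats[simp]:
  "dim_row (ones_eigenvalue_mat n) = n" "dim_col (ones_eigenvalue_mat n) = n"
  "dim_row (ones_eigenbasis_mat n) = n" "dim_col (ones_eigenbasis_mat n) = n"
  by (simp_all add: ones_eigenvalue_mat_def ones_eigenbasis_mat_def)

lemma column_sum_ones_eigenbasis_mat:
  "j < n \<Longrightarrow> (\<Sum>i<n. ones_eigenbasis_mat n $$ (i, j)) = ones_eigenvalue n j"
  by (simp add: ones_eigenbasis_mat_def ones_eigenvalue_def sum_subtractf of_bool_def)

lemma ones_eigenbasis_inv_mult_mat:
  assumes "0 < n"
  shows "ones_eigenbasis_inv_mat n * ones_eigenbasis_mat n = 1\<^sub>m n"
proof (rule eq_matI)
  fix i j assume "i < dim_row (1\<^sub>m n :: real mat)" "j < dim_col (1\<^sub>m n :: real mat)"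
  then have i: "i < n" and j: "j < n" by simp_all
  let ?Q = "ones_eigenbasis_mat n"
  have "(ones_eigenbasis_inv_mat n * ?Q) $$ (i, j) =
        (\<Sum>k<n. (1 / real n - of_bool (i \<noteq> 0 \<and> i = k)) * ?Q $$ (k, j))"
    using i j by (simp add: ones_eigenbasis_inv_mat_def scalar_prod_def lessThan_atLeast0)
  also have "\<dots> = (\<Sum>k<n. ?Q $$ (k, j)) / real n - (\<Sum>k<n. of_bool (i \<noteq> 0 \<and> i = k) * ?Q $$ (k, j))"
    by (simp add: left_diff_distrib sum_subtractf sum_divide_distrib)
  also have "(\<Sum>k<n. of_bool (i \<noteq> 0 \<and> i = k) * ?Q $$ (k, j)) = of_bool (i \<noteq> 0) * ?Q $$ (i, j)"
    using i by (cases "i = 0") (simp_all add: of_bool_def if_distrib[of "\<lambda>x. x * _"] cong: if_cong)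
  also have "(\<Sum>k<n. ?Q $$ (k, j)) = ones_eigenvalue n j"
    using j by (rule column_sum_ones_eigenbasis_mat)
  also have "ones_eigenvalue n j / real n - of_bool (i \<noteq> 0) * ?Q $$ (i, j) = 1\<^sub>m n $$ (i, j)"
    using i j assms by (auto simp: ones_eigenvalue_def ones_eigenbasis_mat_def)
  finally show "(ones_eigenbasis_inv_mat n * ?Q) $$ (i, j) = 1\<^sub>m n $$ (i, j)" .
qed (simp_all add: ones_eigenbasis_inv_mat_def)

lemma ones_mat_mult_eigenbasis_mat:
  "ones_mat n * ones_eigenbasis_mat n = ones_eigenbasis_mat n * ones_eigenvalue_mat n"
proof (rule eq_matI)
  fix i j assume "i < dim_row (ones_eigenbasis_mat n * ones_eigenvalue_mat n)"
    "j < dim_col (ones_eigenbasis_mat n * ones_eigenvalue_mat n)"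
  then have i: "i < n" and j: "j < n" by simp_all
  have "(ones_mat n * ones_eigenbasis_mat n) $$ (i, j) = (\<Sum>k<n. ones_eigenbasis_mat n $$ (k, j))"
    using i j by (simp add: ones_mat_def scalar_prod_def lessThan_atLeast0)
  also have "\<dots> = ones_eigenvalue n j"
    using j by (rule column_sum_ones_eigenbasis_mat)
  also have "\<dots> = (ones_eigenbasis_mat n * ones_eigenvalue_mat n) $$ (i, j)"
    using i j
    by (simp add: ones_eigenvalue_mat_def ones_eigenbasis_mat_def ones_eigenvalue_def scalar_prod_def
        lessThan_atLeast0 if_distrib[of "\<lambda>x. _ * x"] cong: if_cong)
  finally show "(ones_mat n * ones_eigenbasis_mat n) $$ (i, j) =
                (ones_eigenbasis_mat n * ones_eigenvalue_mat n) $$ (i, j)" .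
qed (simp_all add: ones_mat_def)

lemma similar_mat_wit_ones_mat:
  assumes "0 < n"
  shows "similar_mat_wit (ones_mat n) (ones_eigenvalue_mat n)
           (ones_eigenbasis_mat n) (ones_eigenbasis_inv_mat n)"
proof (rule similar_mat_witI)
  let ?Q = "ones_eigenbasis_mat n" and ?Q' = "ones_eigenbasis_inv_mat n"
  show "?Q' * ?Q = 1\<^sub>m n" using assms by (rule ones_eigenbasis_inv_mult_mat)
  then show QQ': "?Q * ?Q' = 1\<^sub>m n"
    by (rule mat_mult_left_right_inverse[rotated 2]) simp_all
  have "ones_mat n = ones_mat n * (?Q * ?Q')"
    by (simp add: QQ' right_mult_one_mat[of _ n n])
  also have "\<dots> = ones_mat n * ?Q * ?Q'"
    by (simp add: assoc_mult_mat[of _ n n _ n _ n])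
  finally show "ones_mat n = ?Q * ones_eigenvalue_mat n * ?Q'"
    by (simp add: ones_mat_mult_eigenbasis_mat)
qed simp_all

lemma similar_mat_wit_ones_mat_add_one:
  assumes "0 < n"
  shows "similar_mat_wit (ones_mat n + 1\<^sub>m n) (ones_eigenvalue_mat n + 1\<^sub>m n)
           (ones_eigenbasis_mat n) (ones_eigenbasis_inv_mat n)"
proof -
  have one: "1 \<cdot>\<^sub>m 1\<^sub>m n = (1\<^sub>m n :: real mat)" by (rule eq_matI) simp_all
  show ?thesis
    using similar_mat_wit_add_smult_one[OF similar_mat_wit_ones_mat[OF assms], of n 1]
    by (simp add: one ones_mat_def)
qed

lemma walk_of_length_0_iff[simp]: "walk_of_length E 0 u v \<longleftrightarrow> u = v"
  by (auto simp: walk_of_length_def)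

lemma walk_of_length_Suc_0_iff: "walk_of_length E (Suc 0) u v \<longleftrightarrow> E u v"
  unfolding walk_of_length_def by (auto intro!: exI[of _ "\<lambda>i. if i = 0 then u else v"])

lemma walk_of_length_2I: "E u w \<Longrightarrow> E w v \<Longrightarrow> walk_of_length E 2 u v"
  unfolding walk_of_length_def
  by (auto intro!: exI[of _ "\<lambda>i. if i = 0 then u else if i = 1 then w else v"] simp: less_2_cases_iff)

lemma graph_dist_eqI:
  assumes "walk_of_length E k u v" "\<And>j. j < k \<Longrightarrow> \<not> walk_of_length E j u v"
  shows "graph_dist E u v = k"
  unfolding graph_dist_def using assms by (metis Least_equality not_less)

lemma ex_less_notin_doubleton:
  assumes "3 \<le> n"
  shows "\<exists>x<n. x \<notin> {a, b :: nat}"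
proof -
  have "\<exists>x\<in>{0, 1, 2}. x \<notin> {a, b}" by auto
  then obtain x where "x \<in> {0, 1, 2}" "x \<notin> {a, b}" by blast
  with assms show ?thesis by (intro exI[of _ x]) auto
qed

lemma kronecker_graph_complete_graph_iff:
  "kronecker_graph (complete_graph m) (complete_graph n) (a, b) (c, d) \<longleftrightarrow>
     a < m \<and> c < m \<and> a \<noteq> c \<and> b < n \<and> d < n \<and> b \<noteq> d"
  by (auto simp: kronecker_graph_def complete_graph_def)

lemma graph_dist_kronecker_complete_graph:
  assumes "3 \<le> m" "3 \<le> n" "a < m" "c < m" "b < n" "d < n"
  shows "graph_dist (kronecker_graph (complete_graph m) (complete_graph n)) (a, b) (c, d) =
         (if a = c \<and> b = d then 0 else if a \<noteq> c \<and> b \<noteq> d then 1 else 2)"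
proof -
  let ?E = "kronecker_graph (complete_graph m) (complete_graph n)"
  consider "a = c \<and> b = d" | "a \<noteq> c \<and> b \<noteq> d" | "(a = c) \<noteq> (b = d)" by blast
  then show ?thesis
  proof cases
    case 1
    then show ?thesis by (auto intro: graph_dist_eqI)
  next
    case 2
    then show ?thesis
      using assms
      by (auto intro!: graph_dist_eqI simp: walk_of_length_Suc_0_iff kronecker_graph_complete_graph_iff)
  next
    case 3
    obtain x where x: "x < m" "x \<notin> {a, c}" using ex_less_notin_doubleton[OF assms(1)] by blast
    obtain y where y: "y < n" "y \<notin> {b, d}" using ex_less_notin_doubleton[OF assms(2)] by blast
    have "walk_of_length ?E 2 (a, b) (c, d)"
      by (rule walk_of_length_2I[where w = "(x, y)"])
        (use assms x y in \<open>auto simp: kronecker_graph_complete_graph_iff\<close>)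
    moreover have "\<not> walk_of_length ?E j (a, b) (c, d)" if "j < 2" for j
      using that 3
      by (auto simp: less_2_cases_iff walk_of_length_Suc_0_iff kronecker_graph_complete_graph_iff)
    ultimately show ?thesis
      using 3 by (simp add: graph_dist_eqI)
  qed
qed

lemma distance_matrix_kronecker_complete_graph:
  assumes "3 \<le> m" "3 \<le> n"
  shows "distance_matrix (kronecker_graph (complete_graph m) (complete_graph n))
           (List.product [0..<m] [0..<n]) =
         kronecker_mat (ones_mat m + 1\<^sub>m m) (ones_mat n + 1\<^sub>m n) + (-4) \<cdot>\<^sub>m 1\<^sub>m (m * n)"
    (is "?D = ?K")
proof (rule eq_matI)
  fix i j assume "i < dim_row ?K" "j < dim_col ?K"
  then have i: "i < m * n" and j: "j < m * n" by (simp_all add: ones_mat_def)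
  have "List.product [0..<m] [0..<n] ! k = (k div n, k mod n)" if "k < m * n" for k
    using that div_mod_less[OF that] by (simp add: product_nth)
  then show "?D $$ (i, j) = ?K $$ (i, j)"
    using i j div_mod_less[OF i] div_mod_less[OF j] eq_iff_div_mod_eq[of i j n]
      graph_dist_kronecker_complete_graph[OF assms, of "i div n" "j div n" "i mod n" "j mod n"]
    by (auto simp: distance_matrix_def ones_mat_def)
qed (simp_all add: distance_matrix_def ones_mat_def)

lemma similar_mat_distance_matrix_kronecker_complete_graph:
  assumes "3 \<le> m" "3 \<le> n"
  shows "similar_mat
           (distance_matrix (kronecker_graph (complete_graph m) (complete_graph n))
              (List.product [0..<m] [0..<n]))
           (kronecker_mat (ones_eigenvalue_mat m + 1\<^sub>m m) (ones_eigenvalue_mat n + 1\<^sub>m n)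
              + (-4) \<cdot>\<^sub>m 1\<^sub>m (m * n))"
proof -
  have "similar_mat_wit
          (kronecker_mat (ones_mat m + 1\<^sub>m m) (ones_mat n + 1\<^sub>m n) + (-4) \<cdot>\<^sub>m 1\<^sub>m (m * n))
          (kronecker_mat (ones_eigenvalue_mat m + 1\<^sub>m m) (ones_eigenvalue_mat n + 1\<^sub>m n)
             + (-4) \<cdot>\<^sub>m 1\<^sub>m (m * n))
          (kronecker_mat (ones_eigenbasis_mat m) (ones_eigenbasis_mat n))
          (kronecker_mat (ones_eigenbasis_inv_mat m) (ones_eigenbasis_inv_mat n))"
    using assms
    by (intro similar_mat_wit_add_smult_one similar_mat_wit_kronecker_mat
        similar_mat_wit_ones_mat_add_one) simp_all
  then show ?thesis
    unfolding distance_matrix_kronecker_complete_graph[OF assms] similar_mat_def by blast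
qed

lemma char_poly_kronecker_ones_eigenvalue_mat:
  "char_poly (kronecker_mat (ones_eigenvalue_mat m + 1\<^sub>m m) (ones_eigenvalue_mat n + 1\<^sub>m n)
                + (-4) \<cdot>\<^sub>m 1\<^sub>m (m * n)) =
   (\<Prod>a<m. \<Prod>b<n. [:- ((ones_eigenvalue m a + 1) * (ones_eigenvalue n b + 1) - 4), 1:])"
  (is "char_poly ?\<Lambda> = _")
proof -
  have "diagonal_mat ?\<Lambda>"
    unfolding diagonal_mat_def
  proof (intro allI impI)
    fix i j assume "i < dim_row ?\<Lambda>" "j < dim_col ?\<Lambda>" "i \<noteq> j"
    then show "?\<Lambda> $$ (i, j) = 0"
      using eq_iff_div_mod_eq[of i j n] by (auto simp: ones_eigenvalue_mat_def div_mod_less)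
  qed
  then have "char_poly ?\<Lambda> = (\<Prod>i<m * n. [:- ?\<Lambda> $$ (i, i), 1:])"
    by (intro char_poly_diagonal_mat) simp_all
  also have "\<dots> = (\<Prod>i<m * n.
      [:- ((ones_eigenvalue m (i div n) + 1) * (ones_eigenvalue n (i mod n) + 1) - 4), 1:])"
    by (intro prod.cong) (auto simp: ones_eigenvalue_mat_def div_mod_less)
  also have "\<dots> = (\<Prod>a<m. \<Prod>b<n. [:- ((ones_eigenvalue m a + 1) * (ones_eigenvalue n b + 1) - 4), 1:])"
    by (rule prod_div_mod)
  finally show ?thesis .
qed

lemma prod_ones_eigenvalue:
  fixes g :: "real \<Rightarrow> real \<Rightarrow> 'a :: comm_monoid_mult"
  assumes "0 < m" "0 < n"
  shows "(\<Prod>a<m. \<Prod>b<n. g (ones_eigenvalue m a) (ones_eigenvalue n b)) =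
         g (real m) (real n) * g (real m) 0 ^ (n - 1) * g 0 (real n) ^ (m - 1)
           * g 0 0 ^ ((m - 1) * (n - 1))"
proof -
  obtain m' n' where m: "m = Suc m'" and n: "n = Suc n'"
    using assms by (auto dest!: gr0_implies_Suc)
  show ?thesis
    unfolding m n prod.lessThan_Suc_shift
    by (simp add: ones_eigenvalue_def power_mult_distrib power_mult[symmetric] mult_ac)
qed

lemma char_poly_distance_matrix_kronecker_complete_graph:
  assumes "3 \<le> m" "3 \<le> n"
  shows "char_poly (distance_matrix (kronecker_graph (complete_graph m) (complete_graph n))
           (List.product [0..<m] [0..<n])) =
         [:- (real (m + 1) * real (n + 1) - 4), 1:] * [:- (real m - 3), 1:] ^ (n - 1)
           * [:- (real n - 3), 1:] ^ (m - 1) * [:- (-3), 1:] ^ ((m - 1) * (n - 1))"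
proof -
  have "char_poly (distance_matrix (kronecker_graph (complete_graph m) (complete_graph n))
           (List.product [0..<m] [0..<n])) =
        (\<Prod>a<m. \<Prod>b<n. [:- ((ones_eigenvalue m a + 1) * (ones_eigenvalue n b + 1) - 4), 1:])"
    using similar_mat_distance_matrix_kronecker_complete_graph[OF assms]
    by (simp add: char_poly_similar char_poly_kronecker_ones_eigenvalue_mat)
  also have "\<dots> = [:- (real (m + 1) * real (n + 1) - 4), 1:] * [:- (real m - 3), 1:] ^ (n - 1)
           * [:- (real n - 3), 1:] ^ (m - 1) * [:- (-3), 1:] ^ ((m - 1) * (n - 1))"
    using prod_ones_eigenvalue[of m n "\<lambda>x y. [:- ((x + 1) * (y + 1) - 4), 1:]"] assms
    by (simp add: algebra_simps)
  finally show ?thesis .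
qed

theorem corollary4p5:
  fixes n :: nat
  assumes "n \<ge> 3"
  shows "char_poly (distance_matrix (kronecker_graph (complete_graph n) (complete_graph n))
                                    (List.product [0..<n] [0..<n]))
         = [:- (real (n - 1) * real (n + 3)), 1:] ^ 1
           * [:- (real n - 3), 1:] ^ (2 * n - 2)
           * [:- (-3), 1:] ^ ((n - 1)^2)"
proof -
  have "real (n + 1) * real (n + 1) - 4 = real (n - 1) * real (n + 3)"
    using assms by (simp add: algebra_simps)
  moreover have "2 * n - 2 = (n - 1) + (n - 1)" and "(n - 1)^2 = (n - 1) * (n - 1)"
    by (simp_all add: power2_eq_square)
  ultimately show ?thesis
    unfolding char_poly_distance_matrix_kronecker_complete_graph[OF assms assms]
    by (simp only: power_one_right power_add mult.assoc)
qed

end
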